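(* Let $G(n,4,1)$ be the graph whose vertices are the $4$-element subsets of $[n]$, two of them adjacent iff they intersect in exactly one element. For a set $A$ of vertices let $d(A)=\max_{x\neq y}|\{v\in A:\{x,y\}\subset v\}|$. If $A$ is an independent set in $G(n,4,1)$ with $d(A)\le \frac{(tn)^2}{2}$ for some $t\in(0,1)$, then $$|A|\le (1+o(1))\max\left(\frac{n^2}{8},\frac{tn^2}{2}\right),$$ where $o(1)\to 0$ as $n\to\infty$ and does not depend on the particular set $A$. *)

theory Defs
  imports Complex_Main
begin

definition G_vertices :: "nat \<Rightarrow> nat set set" where
  "G_vertices n = {v. v \<subseteq> {1..n} \<and> card v = 4}"

definition G_adj :: "nat set \<Rightarrow> nat set \<Rightarrow> bool" where
  "G_adj u v \<longleftrightarrow> card (u \<inter> v) = 1"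

definition G_independent :: "nat \<Rightarrow> nat set set \<Rightarrow> bool" where
  "G_independent n A \<longleftrightarrow> A \<subseteq> G_vertices n \<and> (\<forall>u\<in>A. \<forall>v\<in>A. \<not> G_adj u v)"

definition codeg_max :: "nat \<Rightarrow> nat set set \<Rightarrow> nat" where
  "codeg_max n A = Max {card {v\<in>A. {x, y} \<subseteq> v} | x y. x \<in> {1..n} \<and> y \<in> {1..n} \<and> x \<noteq> y}"

end

theory Submission
  imports Defs
begin

text \<open>
  Call a vertex x pointed if some other vertex lies in every member of A through x. Only O(n)
  members contain an unpointed vertex x: a triple lying in at least 4 members meets every member
  in 0 or at least 2 points, and using members through x that avoid a given vertex, this leaves
  O(1) members through x whose triples at x are all light, and O(1) members per completing vertex
  that contain a heavy triple with an unpointed vertex.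

  If all vertices of a member u are pointed, a choice of partners is a fixed-point-free self-map
  of u, and every member through a vertex contains its partner. So u is the union of two 2-cycles
  (mutual pairs), or contains a 3-cycle (a kernel: every member meeting it contains it), or has a
  vertex whose forward orbit covers u (no other member passes through it), or consists of a mutual
  pair p and two satellites pointing into p. Kernels and private vertices give O(n) members.
  Mutual pairs and satellites are disjoint, so with h pairs and s_p satellites of p,
  2h + \<Sum> s_p \<le> n. There are at most h choose 2 \<le> (n/8) 2h unions of pairs, and at most
  min(d(A), s_p choose 2) \<le> (tn/2) s_p members around p; hence |A| \<le> max(n/8, tn/2) n + O(n).
\<close>

lemma real_choose_two: "real (v choose 2) = real v * (real v - 1) / 2"
proof -
  have "even (v * (v - 1))" by auto
  then show ?thesis by (cases v) (simp_all add: choose_two real_of_nat_div algebra_simps)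
qed

lemma le_mult_half_of_le_square_choose_two:
  fixes s a :: real
  assumes "0 \<le> a" "s \<le> a\<^sup>2 / 2" "s \<le> real (v choose 2)"
  shows "s \<le> a * real v / 2"
proof (cases "real v \<le> a + 1")
  case True
  then have "real v * (real v - 1) \<le> real v * a" by (intro mult_left_mono) auto
  with assms(3) show ?thesis by (simp add: real_choose_two mult.commute)
next
  case False
  then have "a * a \<le> a * real v" using assms(1) by (intro mult_left_mono) auto
  with assms(2) show ?thesis by (simp add: power2_eq_square)
qed

lemma weighted_sum_le_max:
  fixes x y a b c :: real
  assumes "0 \<le> x" "0 \<le> a" "0 \<le> b" "a + b \<le> c"
  shows "x * a + y * b \<le> max x y * c"
proof -
  have "x * a + y * b \<le> max x y * a + max x y * b"
    using assms by (intro add_mono mult_right_mono) auto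
  also have "\<dots> \<le> max x y * c"
    using assms by (simp add: distrib_left[symmetric] mult_left_mono)
  finally show ?thesis .
qed

lemma ex_linear_le_eps_square:
  fixes c \<epsilon> :: real
  assumes "0 < \<epsilon>"
  shows "\<exists>N::nat. \<forall>n\<ge>N. c * real n \<le> \<epsilon> * (real n)\<^sup>2"
proof
  show "\<forall>n\<ge>nat \<lceil>c / \<epsilon>\<rceil>. c * real n \<le> \<epsilon> * (real n)\<^sup>2"
  proof (intro allI impI)
    fix n assume "nat \<lceil>c / \<epsilon>\<rceil> \<le> n"
    then have "c \<le> \<epsilon> * real n" using assms by (simp add: nat_le_iff ceiling_le_iff field_simps)
    then show "c * real n \<le> \<epsilon> * (real n)\<^sup>2"
      by (metis mult.assoc mult_right_mono of_nat_0_le_iff power2_eq_square)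
  qed
qed

lemma card_containing_pair_le_codeg_max:
  assumes "x \<in> {1..n}" "y \<in> {1..n}" "x \<noteq> y"
  shows "card {v\<in>A. {x, y} \<subseteq> v} \<le> codeg_max n A"
proof -
  let ?S = "{card {v\<in>A. {x, y} \<subseteq> v} | x y. x \<in> {1..n} \<and> y \<in> {1..n} \<and> x \<noteq> y}"
  have "?S \<subseteq> (\<lambda>(x, y). card {v\<in>A. {x, y} \<subseteq> v}) ` ({1..n} \<times> {1..n})" by auto
  then have "finite ?S" using finite_subset by blast
  moreover have "card {v\<in>A. {x, y} \<subseteq> v} \<in> ?S" using assms by blast
  ultimately show ?thesis unfolding codeg_max_def by (rule Max_ge)
qed

lemma card_ge_2_other_elem:
  assumes "2 \<le> card S"
  obtains y where "y \<in> S" "y \<noteq> z"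
proof -
  have "\<not> S \<subseteq> {z}" using assms card_mono[of "{z}" S] by auto
  with that show ?thesis by blast
qed

locale G41_independent =
  fixes n :: nat and A :: "nat set set"
  assumes independent: "G_independent n A"
begin

lemma member_subset: "u \<in> A \<Longrightarrow> u \<subseteq> {1..n}"
  using independent by (auto simp: G_independent_def G_vertices_def)

lemma card_member: "u \<in> A \<Longrightarrow> card u = 4"
  using independent by (auto simp: G_independent_def G_vertices_def)

lemma card_Int_members_neq_1: "u \<in> A \<Longrightarrow> v \<in> A \<Longrightarrow> card (u \<inter> v) \<noteq> 1"
  using independent by (auto simp: G_independent_def G_adj_def)

lemma finite_member: "u \<in> A \<Longrightarrow> finite u"
  using member_subset finite_subset by blast

lemma finite_members: "finite A"
  using member_subset finite_subset[of A "Pow {1..n}"] by blast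

lemma member_eq_of_subset:
  assumes "u \<in> A" "w \<in> A" "u \<subseteq> w"
  shows "w = u"
  using card_seteq[OF finite_member[OF assms(2)] assms(3)] card_member assms(1,2) by simp

lemma common_element_besides:
  assumes "u \<in> A" "v \<in> A" "x \<in> u" "x \<in> v"
  obtains y where "y \<in> u" "y \<in> v" "y \<noteq> x"
proof -
  have "u \<inter> v \<noteq> {x}" using card_Int_members_neq_1[OF assms(1,2)] by force
  with assms(3,4) that show ?thesis by blast
qed

definition codeg :: "nat set \<Rightarrow> nat" where
  "codeg T = card {u\<in>A. T \<subseteq> u}"

definition heavy :: "nat set \<Rightarrow> bool" where
  "heavy T \<longleftrightarrow> card T = 3 \<and> 3 < codeg T"

lemma heavy_Int_member:
  assumes T: "heavy T" and g: "g \<in> A" and meet: "T \<inter> g \<noteq> {}"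
  shows "2 \<le> card (T \<inter> g)"
proof (rule ccontr)
  assume "\<not> 2 \<le> card (T \<inter> g)"
  have cT: "card T = 3" and fT: "finite T" using T by (auto simp: heavy_def intro: card_ge_0_finite)
  then have "card (T \<inter> g) = 1" using meet \<open>\<not> 2 \<le> card (T \<inter> g)\<close> by (simp add: Suc_leI card_gt_0_iff le_antisym)
  then obtain a where a: "T \<inter> g = {a}" by (auto simp: card_1_singleton_iff)
  \<comment> \<open>a member through T shares a second point b with g; b lies outside T and determines the member\<close>
  have "{u\<in>A. T \<subseteq> u} \<subseteq> (\<lambda>b. insert b T) ` (g - T)"
  proof
    fix v assume v: "v \<in> {u\<in>A. T \<subseteq> u}"
    then obtain b where b: "b \<in> v" "b \<in> g" "b \<noteq> a"
      using common_element_besides[of v g a] g a by auto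
    then have "b \<notin> T" using a by auto
    have "insert b T \<subseteq> v" using v b by auto
    moreover have "card (insert b T) = card v" using \<open>b \<notin> T\<close> fT cT card_member v by simp
    ultimately have "insert b T = v" using card_seteq[OF finite_member] v by (metis mem_Collect_eq order_refl)
    with b \<open>b \<notin> T\<close> show "v \<in> (\<lambda>b. insert b T) ` (g - T)" by blast
  qed
  then have "codeg T \<le> card ((\<lambda>b. insert b T) ` (g - T))"
    unfolding codeg_def using finite_member[OF g] by (intro card_mono) auto
  also have "\<dots> \<le> card (g - T)" using finite_member[OF g] by (intro card_image_le) simp
  also have "card (g - T) = 3"
    using card_Diff_subset_Int[of g T] finite_member[OF g] card_member[OF g] a by (simp add: Int_commute)
  finally show False using T by (simp add: heavy_def)
qed

lemma heavy_minus_avoided_subset: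
  assumes "heavy T" "g \<in> A" "q \<in> T" "q \<notin> g" "T \<inter> g \<noteq> {}"
  shows "T - {q} \<subseteq> g"
proof -
  have fT: "finite T" and "card (T - {q}) = 2"
    using assms(1,3) by (auto simp: heavy_def intro: card_ge_0_finite)
  moreover have "T \<inter> g \<subseteq> T - {q}" using assms(4) by auto
  moreover have "2 \<le> card (T \<inter> g)" using heavy_Int_member assms(1,2,5) .
  ultimately have "T \<inter> g = T - {q}" by (metis card_seteq finite_Diff)
  then show ?thesis by auto
qed

definition pointed :: "nat \<Rightarrow> bool" where
  "pointed x \<longleftrightarrow> (\<exists>y. y \<noteq> x \<and> (\<forall>u\<in>A. x \<in> u \<longrightarrow> y \<in> u))"

lemma avoiding_members:
  assumes "\<not> pointed x"
  obtains g where "\<And>y. y \<noteq> x \<Longrightarrow> g y \<in> A \<and> x \<in> g y \<and> y \<notin> g y"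
proof -
  have "\<forall>y. \<exists>g. y \<noteq> x \<longrightarrow> g \<in> A \<and> x \<in> g \<and> y \<notin> g"
    using assms unfolding pointed_def by blast
  from choice[OF this] that show ?thesis by blast
qed

definition light_members :: "nat \<Rightarrow> nat set set" where
  "light_members x = {u\<in>A. x \<in> u \<and> (\<forall>T\<subseteq>u. x \<in> T \<longrightarrow> card T = 3 \<longrightarrow> codeg T \<le> 3)}"

lemma card_light_members_through_le:
  assumes "x \<in> T" "card T = 3"
  shows "card {u\<in>light_members x. T \<subseteq> u} \<le> 3"
proof (cases "\<exists>u\<in>light_members x. T \<subseteq> u")
  case True
  then have "codeg T \<le> 3" using assms unfolding light_members_def by auto
  moreover have "card {u\<in>light_members x. T \<subseteq> u} \<le> codeg T"
    unfolding codeg_def light_members_def by (intro card_mono) (auto intro: finite_subset[OF _ finite_members])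
  ultimately show ?thesis by linarith
next
  case False
  then have "{u\<in>light_members x. T \<subseteq> u} = {}" by auto
  then show ?thesis by (metis card.empty zero_le)
qed

lemma card_light_members_le:
  assumes "\<not> pointed x"
  shows "card (light_members x) \<le> 27"
proof (cases "light_members x = {}")
  case False
  then obtain u0 where u0: "u0 \<in> A" "x \<in> u0" unfolding light_members_def by auto
  obtain g where g: "\<And>y. y \<noteq> x \<Longrightarrow> g y \<in> A \<and> x \<in> g y \<and> y \<notin> g y"
    using avoiding_members assms by blast
  let ?F = "\<lambda>y s. {u\<in>light_members x. {x, y, s} \<subseteq> u}"
  \<comment> \<open>a light member u meets u0 in some y \<noteq> x, and then g y in some s \<noteq> x\<close>
  have "light_members x \<subseteq> (\<Union>y\<in>u0 - {x}. \<Union>s\<in>g y - {x}. ?F y s)"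
  proof
    fix u assume u: "u \<in> light_members x"
    then have uA: "u \<in> A" "x \<in> u" unfolding light_members_def by auto
    obtain y where y: "y \<in> u" "y \<in> u0" "y \<noteq> x" using common_element_besides[OF uA(1) u0(1) uA(2) u0(2)] by blast
    obtain s where s: "s \<in> u" "s \<in> g y" "s \<noteq> x" using common_element_besides[OF uA(1), of "g y" x] uA(2) g[OF y(3)] by blast
    show "u \<in> (\<Union>y\<in>u0 - {x}. \<Union>s\<in>g y - {x}. ?F y s)" using u uA y s by auto
  qed
  then have "card (light_members x) \<le> card (\<Union>y\<in>u0 - {x}. \<Union>s\<in>g y - {x}. ?F y s)"
    by (rule card_mono[rotated]) (auto intro: finite_subset[OF _ finite_members] simp: light_members_def)
  also have "\<dots> \<le> (\<Sum>y\<in>u0 - {x}. \<Sum>s\<in>g y - {x}. card (?F y s))"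
    by (intro order_trans[OF card_UN_le] sum_mono card_UN_le) (auto simp: finite_member u0 g)
  also have "\<dots> \<le> (\<Sum>y\<in>u0 - {x}. \<Sum>s\<in>g y - {x}. 3)"
  proof (intro sum_mono)
    fix y s assume "y \<in> u0 - {x}" "s \<in> g y - {x}"
    then have "s \<noteq> y" "y \<noteq> x" "s \<noteq> x" using g by auto
    then have "card {x, y, s} = 3" by auto
    then show "card (?F y s) \<le> 3" by (rule card_light_members_through_le[rotated]) simp
  qed
  also have "\<dots> = (\<Sum>y\<in>u0 - {x}. 9)"
  proof (rule sum.cong)
    fix y assume "y \<in> u0 - {x}"
    then have "card (g y - {x}) = 3" using g[of y] card_member by (simp add: card_Diff_singleton)
    then show "(\<Sum>s\<in>g y - {x}. 3) = (9::nat)" by simp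
  qed simp
  also have "\<dots> = 27" using u0 card_member by (simp add: card_Diff_singleton)
  finally show ?thesis .
qed simp

definition heavy_links :: "nat \<Rightarrow> nat set set" where
  "heavy_links w = {T. heavy T \<and> (\<exists>x\<in>T. \<not> pointed x) \<and> w \<notin> T \<and> insert w T \<in> A}"

lemma card_Int_heavy_links_ge:
  assumes "T \<in> heavy_links w" "T' \<in> heavy_links w"
  shows "2 \<le> card (T \<inter> T')"
proof -
  have T: "heavy T" "w \<notin> T" "insert w T \<in> A" and T': "w \<notin> T'" "insert w T' \<in> A"
    using assms unfolding heavy_links_def by auto
  have "insert w T \<inter> insert w T' = insert w (T \<inter> T')" by auto
  then have "T \<inter> T' \<noteq> {}" using card_Int_members_neq_1[OF T(3) T'(2)] by force
  moreover have "T \<inter> insert w T' = T \<inter> T'" using T(2) by auto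
  ultimately show ?thesis using heavy_Int_member[OF T(1) T'(2)] by simp
qed

lemma heavy_link_subset:
  assumes T0: "T0 \<in> heavy_links w" and T: "T \<in> heavy_links w" and x: "x \<in> T0"
    and g: "\<And>y. y \<noteq> x \<Longrightarrow> g y \<in> A \<and> x \<in> g y \<and> y \<notin> g y"
  shows "T \<subseteq> T0 \<union> (\<Union>q\<in>T0 - {x}. g q)"
proof -
  have "2 \<le> card (T \<inter> T0)" using card_Int_heavy_links_ge[OF T T0] .
  then obtain q r where qr: "q \<in> T \<inter> T0" "q \<noteq> x" "r \<in> T \<inter> T0" "r \<noteq> q"
    using card_ge_2_other_elem by metis
  have "T0 - {q} \<subseteq> g q"
    using heavy_minus_avoided_subset T0 g[OF qr(2)] qr(1) x unfolding heavy_links_def by blast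
  then have "T - {q} \<subseteq> g q"
    using heavy_minus_avoided_subset T g[OF qr(2)] qr unfolding heavy_links_def by blast
  then show ?thesis using qr by blast
qed

lemma finite_heavy_links: "finite (heavy_links w)"
  by (rule finite_subset[of _ "Pow {1..n}"]) (auto simp: heavy_links_def dest!: member_subset)

lemma card_heavy_links_le: "card (heavy_links w) \<le> 165"
proof (cases "heavy_links w = {}")
  case False
  then obtain T0 x where T0: "T0 \<in> heavy_links w" and x: "x \<in> T0" "\<not> pointed x"
    unfolding heavy_links_def by blast
  obtain g where g: "\<And>y. y \<noteq> x \<Longrightarrow> g y \<in> A \<and> x \<in> g y \<and> y \<notin> g y"
    using avoiding_members x(2) by blast
  define S where "S = T0 \<union> (\<Union>q\<in>T0 - {x}. g q)"
  have cT0: "card T0 = 3" "finite T0" using T0 by (auto simp: heavy_links_def heavy_def intro: card_ge_0_finite)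
  have "card (\<Union>q\<in>T0 - {x}. g q) \<le> (\<Sum>q\<in>T0 - {x}. card (g q))"
    using cT0 by (intro card_UN_le) simp
  also have "\<dots> = (\<Sum>q\<in>T0 - {x}. 4)" using g card_member by (intro sum.cong) auto
  also have "\<dots> = 8" using cT0 x(1) by (simp add: card_Diff_singleton)
  finally have "card S \<le> 11" unfolding S_def using cT0 card_Un_le[of T0 "\<Union>q\<in>T0 - {x}. g q"] by linarith
  have "finite S" unfolding S_def using cT0 g finite_member by auto
  have "heavy_links w \<subseteq> {T. T \<subseteq> S \<and> card T = 3}"
    using heavy_link_subset[OF T0 _ x(1) g] unfolding S_def by (auto simp: heavy_links_def heavy_def)
  then have "card (heavy_links w) \<le> card {T. T \<subseteq> S \<and> card T = 3}"
    using \<open>finite S\<close> by (intro card_mono) auto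
  also have "\<dots> = card S choose 3" using n_subsets[OF \<open>finite S\<close>] .
  also have "\<dots> \<le> 11 choose 3" using \<open>card S \<le> 11\<close> by (rule binomial_right_mono)
  also have "\<dots> = 165" by code_simp
  finally show ?thesis .
qed simp

lemma unpointed_members_subset:
  "{u\<in>A. \<exists>x\<in>u. \<not> pointed x}
     \<subseteq> (\<Union>x\<in>{x\<in>{1..n}. \<not> pointed x}. light_members x) \<union> (\<Union>w\<in>{1..n}. insert w ` heavy_links w)"
proof
  fix u assume "u \<in> {u\<in>A. \<exists>x\<in>u. \<not> pointed x}"
  then obtain x where u: "u \<in> A" "x \<in> u" "\<not> pointed x" by auto
  show "u \<in> (\<Union>x\<in>{x\<in>{1..n}. \<not> pointed x}. light_members x) \<union> (\<Union>w\<in>{1..n}. insert w ` heavy_links w)"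
  proof (cases "u \<in> light_members x")
    case True
    then show ?thesis using u member_subset by blast
  next
    case False
    then have "\<not> (\<forall>T\<subseteq>u. x \<in> T \<longrightarrow> card T = 3 \<longrightarrow> codeg T \<le> 3)"
      using u unfolding light_members_def by blast
    then obtain T where T: "T \<subseteq> u" "x \<in> T" "heavy T" unfolding heavy_def by (auto simp: not_le)
    then have "card (u - T) = 1"
      using card_Diff_subset[OF finite_subset[OF T(1) finite_member[OF u(1)]] T(1)] card_member[OF u(1)]
      by (simp add: heavy_def)
    then obtain w where w: "u - T = {w}" by (auto simp: card_1_singleton_iff)
    then have "u = insert w T" "w \<notin> T" "w \<in> {1..n}" using T(1) member_subset[OF u(1)] by auto
    moreover have "T \<in> heavy_links w"
      unfolding heavy_links_def using T u \<open>u = insert w T\<close> \<open>w \<notin> T\<close> by blast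
    ultimately show ?thesis by blast
  qed
qed

lemma card_unpointed_members_le: "card {u\<in>A. \<exists>x\<in>u. \<not> pointed x} \<le> 192 * n"
proof -
  let ?L = "\<Union>x\<in>{x\<in>{1..n}. \<not> pointed x}. light_members x"
  let ?H = "\<Union>w\<in>{1..n}. insert w ` heavy_links w"
  note unpointed_members_subset
  moreover have "finite ?L" by (rule finite_subset[OF _ finite_members]) (auto simp: light_members_def)
  moreover have "finite ?H" using finite_heavy_links by simp
  ultimately have "card {u\<in>A. \<exists>x\<in>u. \<not> pointed x} \<le> card (?L \<union> ?H)" by (intro card_mono) auto
  also have "\<dots> \<le> card ?L + card ?H" by (rule card_Un_le)
  finally have "card {u\<in>A. \<exists>x\<in>u. \<not> pointed x} \<le> card ?L + card ?H" .
  moreover have "card ?L \<le> 27 * n"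
  proof -
    have "card ?L \<le> (\<Sum>x\<in>{x\<in>{1..n}. \<not> pointed x}. card (light_members x))" by (rule card_UN_le) simp
    also have "\<dots> \<le> (\<Sum>x\<in>{x\<in>{1..n}. \<not> pointed x}. 27)"
      using card_light_members_le by (intro sum_mono) simp
    also have "\<dots> \<le> (\<Sum>x\<in>{1..n}. 27)" by (intro sum_mono2) auto
    finally show ?thesis by simp
  qed
  moreover have "card ?H \<le> 165 * n"
  proof -
    have "card ?H \<le> (\<Sum>w\<in>{1..n}. card (insert w ` heavy_links w))" by (rule card_UN_le) simp
    also have "\<dots> \<le> (\<Sum>w\<in>{1..n}. 165)"
      by (intro sum_mono order_trans[OF card_image_le[OF finite_heavy_links] card_heavy_links_le])
    finally show ?thesis by simp
  qed
  ultimately show ?thesis by linarith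
qed

text \<open>For an unpointed x the choice below is arbitrary; partner is only used at pointed vertices.\<close>
definition partner :: "nat \<Rightarrow> nat" where
  "partner x = (SOME y. y \<noteq> x \<and> (\<forall>u\<in>A. x \<in> u \<longrightarrow> y \<in> u))"

lemma partner_spec:
  assumes "pointed x"
  shows "partner x \<noteq> x \<and> (\<forall>u\<in>A. x \<in> u \<longrightarrow> partner x \<in> u)"
  unfolding partner_def by (rule someI_ex) (use assms in \<open>simp add: pointed_def\<close>)

lemma partner_neq: "pointed x \<Longrightarrow> partner x \<noteq> x"
  using partner_spec by blast

lemma partner_mem: "pointed x \<Longrightarrow> u \<in> A \<Longrightarrow> x \<in> u \<Longrightarrow> partner x \<in> u"
  using partner_spec by blast

text \<open>Vertices outside [n] lie in no member and are therefore vacuously pointed; the range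
  conditions in mutual and satellites exclude them.\<close>
definition mutual :: "nat \<Rightarrow> bool" where
  "mutual x \<longleftrightarrow> x \<in> {1..n} \<and> partner x \<in> {1..n} \<and> pointed x \<and> pointed (partner x)
     \<and> partner (partner x) = x"

definition mutual_pairs :: "nat set set" where
  "mutual_pairs = {{x, partner x} | x. mutual x}"

definition satellites :: "nat set \<Rightarrow> nat set" where
  "satellites p = {c\<in>{1..n}. pointed c \<and> c \<notin> p \<and> partner c \<in> p}"

definition pair_members :: "nat set \<Rightarrow> nat set set" where
  "pair_members p = {u\<in>A. p \<subseteq> u \<and> u - p \<subseteq> satellites p}"

definition pair_unions :: "nat set set" where
  "pair_unions = {u\<in>A. \<exists>p\<in>mutual_pairs. \<exists>q\<in>mutual_pairs. p \<noteq> q \<and> u = p \<union> q}"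

definition private_members :: "nat set set" where
  "private_members = {u\<in>A. \<exists>c\<in>u. \<forall>v\<in>A. c \<in> v \<longrightarrow> v = u}"

definition kernel :: "nat set \<Rightarrow> bool" where
  "kernel T \<longleftrightarrow> card T = 3 \<and> (\<forall>t\<in>T. \<forall>v\<in>A. t \<in> v \<longrightarrow> T \<subseteq> v)"

definition kernel_members :: "nat set set" where
  "kernel_members = {u\<in>A. \<exists>T\<subseteq>u. kernel T}"

lemma partner_in_pointed_member:
  assumes "u \<in> A" "\<forall>c\<in>u. pointed c" "c \<in> u"
  shows "partner c \<in> u \<and> partner c \<noteq> c"
proof -
  have "pointed c" using assms(2,3) by blast
  then show ?thesis using partner_mem[OF _ assms(1,3)] partner_neq by blast
qed

lemma mutual_pairs_memI:
  assumes "u \<in> A" "\<forall>c\<in>u. pointed c" "x \<in> u" "partner (partner x) = x"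
  shows "{x, partner x} \<in> mutual_pairs"
proof -
  have "partner x \<in> u" using partner_in_pointed_member assms by blast
  then have "mutual x" unfolding mutual_def using assms member_subset[OF assms(1)] by auto
  then show ?thesis unfolding mutual_pairs_def by blast
qed

lemma private_membersI:
  assumes "u \<in> A" "c \<in> u" "\<And>v. v \<in> A \<Longrightarrow> c \<in> v \<Longrightarrow> u \<subseteq> v"
  shows "u \<in> private_members"
proof -
  have "\<forall>v\<in>A. c \<in> v \<longrightarrow> v = u" using assms(3) member_eq_of_subset[OF assms(1)] by blast
  then show ?thesis unfolding private_members_def using assms(1,2) by blast
qed

lemma pair_unionsI:
  assumes u: "u \<in> A" and pt: "\<forall>c\<in>u. pointed c" and inv: "\<forall>c\<in>u. partner (partner c) = c"
  shows "u \<in> pair_unions"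
proof -
  have cu: "card u = 4" "finite u" using card_member finite_member u by auto
  then obtain v where v: "v \<in> u" by (metis card.empty ex_in_conv zero_neq_numeral)
  let ?p = "{v, partner v}"
  have pv: "partner v \<in> u" "partner v \<noteq> v" using partner_in_pointed_member[OF u pt v] by auto
  have "card ?p = 2" using pv(2) by simp
  then have "\<not> u \<subseteq> ?p" using card_mono[of ?p u] cu by auto
  then obtain w where w: "w \<in> u" "w \<notin> ?p" by blast
  let ?q = "{w, partner w}"
  have pw: "partner w \<in> u" "partner w \<noteq> w" using partner_in_pointed_member[OF u pt w(1)] by auto
  have "partner (partner w) = w" "partner (partner v) = v" using inv v w(1) by auto
  then have "partner w \<noteq> v" "partner w \<noteq> partner v" using w(2) by auto
  then have "card (?p \<union> ?q) = 4" using w pv(2) pw(2) by (auto simp: card_insert_if)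
  moreover have "?p \<union> ?q \<subseteq> u" using v w(1) pv(1) pw(1) by blast
  ultimately have eq: "u = ?p \<union> ?q" using card_seteq[OF cu(2)] cu(1) by (metis order_refl)
  have p: "?p \<in> mutual_pairs" and q: "?q \<in> mutual_pairs"
    using mutual_pairs_memI[OF u pt] inv v w(1) by auto
  have pq: "?p \<noteq> ?q" using w(2) by (auto simp: doubleton_eq_iff)
  have "\<exists>p\<in>mutual_pairs. \<exists>q\<in>mutual_pairs. p \<noteq> q \<and> u = p \<union> q"
    by (intro bexI[of _ ?p] bexI[of _ ?q] conjI pq eq p q)
  then show ?thesis unfolding pair_unions_def using u by simp
qed

lemma kernel_membersI:
  assumes u: "u \<in> A" and pt: "\<forall>c\<in>u. pointed c" and v: "v \<in> u"
    and "partner (partner v) \<noteq> v" and "partner (partner (partner v)) = v"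
  shows "u \<in> kernel_members"
proof -
  let ?y = "partner v" let ?z = "partner ?y"
  have y: "?y \<in> u" "?y \<noteq> v" using partner_in_pointed_member[OF u pt v] by auto
  have z: "?z \<in> u" "?z \<noteq> ?y" using partner_in_pointed_member[OF u pt y(1)] by auto
  have pointed: "pointed v" "pointed ?y" "pointed ?z" using pt v y(1) z(1) by auto
  have "v \<in> w \<Longrightarrow> ?y \<in> w" "?y \<in> w \<Longrightarrow> ?z \<in> w" "?z \<in> w \<Longrightarrow> v \<in> w" if "w \<in> A" for w
    using partner_mem[OF pointed(1) that] partner_mem[OF pointed(2) that] partner_mem[OF pointed(3) that]
      assms(5) by auto
  then have "\<forall>t\<in>{v, ?y, ?z}. \<forall>w\<in>A. t \<in> w \<longrightarrow> {v, ?y, ?z} \<subseteq> w" by blast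
  moreover have "card {v, ?y, ?z} = 3" using y z assms(4) by simp
  ultimately have "kernel {v, ?y, ?z}" unfolding kernel_def by blast
  moreover have "{v, ?y, ?z} \<subseteq> u" using v y z by blast
  ultimately show ?thesis unfolding kernel_members_def using u by blast
qed

lemma pair_or_private_member:
  assumes u: "u \<in> A" and pt: "\<forall>c\<in>u. pointed c" and v: "v \<in> u"
    and "partner (partner v) \<noteq> v" and "partner (partner (partner v)) = partner v"
  shows "(\<exists>p\<in>mutual_pairs. u \<in> pair_members p) \<or> u \<in> private_members"
proof -
  let ?y = "partner v" let ?z = "partner ?y"
  have y: "?y \<in> u" "?y \<noteq> v" using partner_in_pointed_member[OF u pt v] by auto
  have z: "?z \<in> u" "?z \<noteq> ?y" "?z \<noteq> v"
    using partner_in_pointed_member[OF u pt y(1)] assms(4) by auto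
  let ?p = "{?y, ?z}"
  have p: "?p \<in> mutual_pairs" using mutual_pairs_memI[OF u pt y(1)] assms(5) by simp
  have "card (u - {v, ?y, ?z}) = 1"
    using card_Diff_subset[of "{v, ?y, ?z}" u] card_member[OF u] v y z by (simp add: card_insert_if)
  then obtain w where w: "u - {v, ?y, ?z} = {w}" by (auto simp: card_1_singleton_iff)
  then have u_eq: "u = {v, ?y, ?z, w}" and w_u: "w \<in> u" "w \<notin> {v, ?y, ?z}" using v y z by auto
  have "partner w \<in> {v, ?y, ?z}" using partner_in_pointed_member[OF u pt w_u(1)] u_eq by blast
  then consider "partner w = v" | "partner w \<in> ?p" by blast
  then show ?thesis
  proof cases
    case 1
    have "u \<subseteq> x" if x: "x \<in> A" "w \<in> x" for x
    proof -
      have "v \<in> x" using partner_mem[OF _ x] pt w_u(1) 1 by force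
      then have "?y \<in> x" using partner_mem[OF _ x(1)] pt v by blast
      then have "?z \<in> x" using partner_mem[OF _ x(1)] pt y(1) by blast
      with \<open>v \<in> x\<close> \<open>?y \<in> x\<close> x(2) show ?thesis by (simp add: u_eq)
    qed
    then show ?thesis using private_membersI[OF u w_u(1)] by blast
  next
    case 2
    have "u - ?p \<subseteq> satellites ?p"
      unfolding satellites_def using u_eq w_u v y z 2 pt member_subset[OF u] by auto
    then have "u \<in> pair_members ?p" unfolding pair_members_def using u y z by blast
    then show ?thesis using p by blast
  qed
qed

lemma private_member_of_long_orbit:
  assumes u: "u \<in> A" and pt: "\<forall>c\<in>u. pointed c" and v: "v \<in> u"
    and "partner (partner v) \<noteq> v" and "partner (partner (partner v)) \<notin> {v, partner v}"
  shows "u \<in> private_members"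
proof -
  let ?y = "partner v" let ?z = "partner ?y" let ?r = "partner ?z"
  have y: "?y \<in> u" "?y \<noteq> v" using partner_in_pointed_member[OF u pt v] by auto
  have z: "?z \<in> u" "?z \<noteq> ?y" using partner_in_pointed_member[OF u pt y(1)] by auto
  have r: "?r \<in> u" "?r \<noteq> ?z" using partner_in_pointed_member[OF u pt z(1)] by auto
  have "card {v, ?y, ?z, ?r} = 4" using y z r assms(4,5) by (auto simp: card_insert_if)
  moreover have "{v, ?y, ?z, ?r} \<subseteq> u" using v y z r by blast
  ultimately have u_eq: "u = {v, ?y, ?z, ?r}"
    using card_seteq[OF finite_member[OF u]] card_member[OF u] by (metis order_refl)
  have "u \<subseteq> x" if x: "x \<in> A" "v \<in> x" for x
  proof -
    have "?y \<in> x" using partner_mem[OF _ x(1)] pt v x(2) by blast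
    then have "?z \<in> x" using partner_mem[OF _ x(1)] pt y(1) by blast
    then have "?r \<in> x" using partner_mem[OF _ x(1)] pt z(1) by blast
    with \<open>?y \<in> x\<close> \<open>?z \<in> x\<close> x(2) show ?thesis by (simp add: u_eq)
  qed
  then show ?thesis using private_membersI[OF u v] by blast
qed

lemma pointed_member_cases:
  assumes u: "u \<in> A" and pt: "\<forall>c\<in>u. pointed c"
  shows "u \<in> pair_unions \<or> (\<exists>p\<in>mutual_pairs. u \<in> pair_members p) \<or> u \<in> private_members
    \<or> u \<in> kernel_members"
proof (cases "\<forall>c\<in>u. partner (partner c) = c")
  case True
  then show ?thesis using pair_unionsI u pt by blast
next
  case False
  then obtain v where v: "v \<in> u" "partner (partner v) \<noteq> v" by blast
  consider "partner (partner (partner v)) = v" | "partner (partner (partner v)) = partner v"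
    | "partner (partner (partner v)) \<notin> {v, partner v}" by blast
  then show ?thesis
    using kernel_membersI[OF u pt v] pair_or_private_member[OF u pt v] private_member_of_long_orbit[OF u pt v]
    by cases blast+
qed

lemma mutual_pairs_eq:
  assumes "p \<in> mutual_pairs" "c \<in> p"
  shows "p = {c, partner c}"
proof -
  obtain x where x: "mutual x" "p = {x, partner x}" using assms(1) unfolding mutual_pairs_def by blast
  then have "partner (partner x) = x" unfolding mutual_def by blast
  with x(2) assms(2) show ?thesis by auto
qed

lemma mutual_pairs_card: "p \<in> mutual_pairs \<Longrightarrow> card p = 2"
  and mutual_pairs_subset: "p \<in> mutual_pairs \<Longrightarrow> p \<subseteq> {1..n}"
  and mutual_pairs_partner: "p \<in> mutual_pairs \<Longrightarrow> c \<in> p \<Longrightarrow> partner c \<in> {1..n} \<and> partner c \<noteq> c"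
  unfolding mutual_pairs_def mutual_def by (auto dest: partner_neq)

lemma finite_mutual_pairs: "finite mutual_pairs"
  using mutual_pairs_subset finite_subset[of mutual_pairs "Pow {1..n}"] by blast

lemma mutual_pairs_disjoint:
  assumes "p \<in> mutual_pairs" "q \<in> mutual_pairs" "c \<in> p" "c \<in> q"
  shows "p = q"
  using mutual_pairs_eq[OF assms(1,3)] mutual_pairs_eq[OF assms(2,4)] by simp

lemma satellites_disjoint_mutual_pairs:
  assumes "p \<in> mutual_pairs" "q \<in> mutual_pairs"
  shows "satellites p \<inter> q = {}"
proof -
  have "c \<notin> q" if c: "c \<in> satellites p" for c
  proof
    assume "c \<in> q"
    then have "partner c \<in> q" using mutual_pairs_eq[OF assms(2)] by blast
    moreover have "partner c \<in> p" "c \<notin> p" using c unfolding satellites_def by auto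
    ultimately show False using mutual_pairs_disjoint[OF assms(1,2)] \<open>c \<in> q\<close> by blast
  qed
  then show ?thesis by blast
qed

lemma satellites_disjoint:
  assumes "p \<in> mutual_pairs" "q \<in> mutual_pairs" "p \<noteq> q"
  shows "satellites p \<inter> satellites q = {}"
  using mutual_pairs_disjoint[OF assms(1,2)] assms(3) unfolding satellites_def by blast

lemma card_mutual_pairs_satellites_le:
  "2 * card mutual_pairs + (\<Sum>p\<in>mutual_pairs. card (satellites p)) \<le> n"
proof -
  have fin: "finite p" if "p \<in> mutual_pairs" for p
    using mutual_pairs_subset[OF that] finite_subset by blast
  have fin_sat: "finite (satellites p)" for p unfolding satellites_def by simp
  have "card (\<Union>mutual_pairs) = (\<Sum>p\<in>mutual_pairs. card p)"
    by (rule card_Union_disjoint) (auto simp: pairwise_def disjnt_def fin dest: mutual_pairs_disjoint)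
  also have "\<dots> = 2 * card mutual_pairs" by (simp add: mutual_pairs_card)
  finally have pairs: "card (\<Union>mutual_pairs) = 2 * card mutual_pairs" .
  have sats: "card (\<Union>p\<in>mutual_pairs. satellites p) = (\<Sum>p\<in>mutual_pairs. card (satellites p))"
    by (rule card_UN_disjoint) (auto simp: finite_mutual_pairs fin_sat dest: satellites_disjoint)
  have "\<Union>mutual_pairs \<inter> (\<Union>p\<in>mutual_pairs. satellites p) = {}"
    using satellites_disjoint_mutual_pairs by blast
  then have "card (\<Union>mutual_pairs \<union> (\<Union>p\<in>mutual_pairs. satellites p))
      = 2 * card mutual_pairs + (\<Sum>p\<in>mutual_pairs. card (satellites p))"
    using pairs sats by (simp add: card_Un_disjoint finite_mutual_pairs fin fin_sat)
  moreover have "\<Union>mutual_pairs \<union> (\<Union>p\<in>mutual_pairs. satellites p) \<subseteq> {1..n}"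
    using mutual_pairs_subset unfolding satellites_def by auto
  then have "card (\<Union>mutual_pairs \<union> (\<Union>p\<in>mutual_pairs. satellites p)) \<le> card {1..n}"
    by (intro card_mono) simp_all
  ultimately show ?thesis by simp
qed

lemma card_pair_unions_le: "card pair_unions \<le> card mutual_pairs choose 2"
proof -
  have "pair_unions \<subseteq> Union ` {P. P \<subseteq> mutual_pairs \<and> card P = 2}"
  proof
    fix u assume "u \<in> pair_unions"
    then obtain p q where pq: "p \<in> mutual_pairs" "q \<in> mutual_pairs" "p \<noteq> q" "u = p \<union> q"
      unfolding pair_unions_def by blast
    then have "u = \<Union>{p, q}" "{p, q} \<in> {P. P \<subseteq> mutual_pairs \<and> card P = 2}" by auto
    then show "u \<in> Union ` {P. P \<subseteq> mutual_pairs \<and> card P = 2}" by (rule image_eqI)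
  qed
  then have "card pair_unions \<le> card (Union ` {P. P \<subseteq> mutual_pairs \<and> card P = 2})"
    using finite_mutual_pairs by (intro card_mono) auto
  also have "\<dots> \<le> card {P. P \<subseteq> mutual_pairs \<and> card P = 2}"
    using finite_mutual_pairs by (intro card_image_le) simp
  also have "\<dots> = card mutual_pairs choose 2" by (rule n_subsets[OF finite_mutual_pairs])
  finally show ?thesis .
qed

lemma card_pair_members_le_codeg_max:
  assumes "p \<in> mutual_pairs"
  shows "card (pair_members p) \<le> codeg_max n A"
proof -
  obtain x where x: "x \<in> p" using mutual_pairs_card[OF assms] by fastforce
  then have p: "p = {x, partner x}" using mutual_pairs_eq[OF assms] by blast
  have "card (pair_members p) \<le> card {v\<in>A. {x, partner x} \<subseteq> v}"
    using finite_members unfolding pair_members_def p by (intro card_mono) auto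
  also have "\<dots> \<le> codeg_max n A"
    using mutual_pairs_subset[OF assms] mutual_pairs_partner[OF assms x] x
    by (intro card_containing_pair_le_codeg_max) auto
  finally show ?thesis .
qed

lemma card_pair_members_le_choose:
  assumes "p \<in> mutual_pairs"
  shows "card (pair_members p) \<le> card (satellites p) choose 2"
proof -
  have fin_sat: "finite (satellites p)" unfolding satellites_def by simp
  have "finite p" using mutual_pairs_subset[OF assms] finite_subset by blast
  have "inj_on (\<lambda>u. u - p) (pair_members p)"
    by (rule inj_onI) (auto simp: pair_members_def)
  moreover have "(\<lambda>u. u - p) ` pair_members p \<subseteq> {e. e \<subseteq> satellites p \<and> card e = 2}"
  proof
    fix e assume "e \<in> (\<lambda>u. u - p) ` pair_members p"
    then obtain u where u: "u \<in> A" "p \<subseteq> u" "u - p \<subseteq> satellites p" "e = u - p"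
      unfolding pair_members_def by blast
    then have "card e = 2"
      using card_Diff_subset[OF \<open>finite p\<close> u(2)] card_member[OF u(1)] mutual_pairs_card[OF assms] by simp
    with u show "e \<in> {e. e \<subseteq> satellites p \<and> card e = 2}" by simp
  qed
  ultimately have "card (pair_members p) \<le> card {e. e \<subseteq> satellites p \<and> card e = 2}"
    using fin_sat by (intro card_inj_on_le) auto
  also have "\<dots> = card (satellites p) choose 2" by (rule n_subsets[OF fin_sat])
  finally show ?thesis .
qed

lemma card_private_members_le: "card private_members \<le> n"
proof -
  let ?f = "\<lambda>c. SOME u. u \<in> A \<and> c \<in> u"
  have "private_members \<subseteq> ?f ` {1..n}"
  proof
    fix u assume "u \<in> private_members"
    then obtain c where c: "u \<in> A" "c \<in> u" "\<forall>v\<in>A. c \<in> v \<longrightarrow> v = u"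
      unfolding private_members_def by blast
    have "?f c \<in> A \<and> c \<in> ?f c" by (rule someI_ex) (use c in blast)
    then have "u = ?f c" using c(3) by (metis (no_types, lifting))
    moreover have "c \<in> {1..n}" using member_subset[OF c(1)] c(2) by blast
    ultimately show "u \<in> ?f ` {1..n}" by (rule image_eqI)
  qed
  then have "card private_members \<le> card (?f ` {1..n})" by (intro card_mono) auto
  also have "\<dots> \<le> n" using card_image_le[of "{1..n}" ?f] by simp
  finally show ?thesis .
qed

text \<open>A member containing a kernel is recovered from its vertex outside the kernel: two members
  through that vertex share a second vertex, which lies in the kernel of the first.\<close>
lemma card_kernel_members_le: "card kernel_members \<le> n"
proof -
  let ?f = "\<lambda>w. SOME u. u \<in> A \<and> w \<in> u \<and> kernel (u - {w})"
  have "kernel_members \<subseteq> ?f ` {1..n}"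
  proof
    fix u assume "u \<in> kernel_members"
    then obtain T where T: "u \<in> A" "T \<subseteq> u" "kernel T" unfolding kernel_members_def by blast
    have "card (u - T) = 1"
      using card_Diff_subset[OF finite_subset[OF T(2) finite_member[OF T(1)]] T(2)] card_member[OF T(1)] T(3)
      unfolding kernel_def by simp
    then obtain w where w: "u - T = {w}" by (auto simp: card_1_singleton_iff)
    then have uT: "u - {w} = T" and wu: "w \<in> u" using T(2) by auto
    let ?u' = "?f w"
    have u': "?u' \<in> A \<and> w \<in> ?u' \<and> kernel (?u' - {w})" by (rule someI_ex) (use T uT wu in auto)
    then obtain e where e: "e \<in> u" "e \<in> ?u'" "e \<noteq> w" using common_element_besides[OF T(1), of ?u' w] wu by blast
    then have "e \<in> T" using uT by blast
    then have "T \<subseteq> ?u'" using T(3) u' e(2) unfolding kernel_def by blast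
    then have "u \<subseteq> ?u'" using uT u' by blast
    then have "u = ?u'" using member_eq_of_subset T(1) u' by simp
    moreover have "w \<in> {1..n}" using member_subset[OF T(1)] wu by blast
    ultimately show "u \<in> ?f ` {1..n}" by (rule image_eqI)
  qed
  then have "card kernel_members \<le> card (?f ` {1..n})" by (intro card_mono) auto
  also have "\<dots> \<le> n" using card_image_le[of "{1..n}" ?f] by simp
  finally show ?thesis .
qed

lemma card_le_sum_classes:
  "card A \<le> card {u\<in>A. \<exists>x\<in>u. \<not> pointed x} + card pair_unions
     + (\<Sum>p\<in>mutual_pairs. card (pair_members p)) + card private_members + card kernel_members"
proof -
  let ?U = "{u\<in>A. \<exists>x\<in>u. \<not> pointed x}" and ?S = "\<Union>p\<in>mutual_pairs. pair_members p"
  have "A \<subseteq> ?U \<union> pair_unions \<union> ?S \<union> private_members \<union> kernel_members"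
    using pointed_member_cases by blast
  then have "card A \<le> card (?U \<union> pair_unions \<union> ?S \<union> private_members \<union> kernel_members)"
    by (intro card_mono) (auto simp: pair_unions_def pair_members_def private_members_def
        kernel_members_def finite_mutual_pairs intro: finite_subset[OF _ finite_members])
  also have "\<dots> \<le> card ?U + card pair_unions + card ?S + card private_members + card kernel_members"
    by (intro order_trans[OF card_Un_le] add_mono order_refl) 
  also have "card ?S \<le> (\<Sum>p\<in>mutual_pairs. card (pair_members p))"
    by (rule card_UN_le[OF finite_mutual_pairs])
  finally show ?thesis by linarith
qed

lemma card_pair_members_le_satellites:
  fixes t :: real
  assumes "0 < t" "real (codeg_max n A) \<le> (t * real n)\<^sup>2 / 2" "p \<in> mutual_pairs"
  shows "real (card (pair_members p)) \<le> t * real n / 2 * real (card (satellites p))"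
proof -
  have "real (card (pair_members p)) \<le> t * real n * real (card (satellites p)) / 2"
  proof (rule le_mult_half_of_le_square_choose_two)
    show "real (card (pair_members p)) \<le> (t * real n)\<^sup>2 / 2"
      using card_pair_members_le_codeg_max[OF assms(3)] assms(2) by linarith
    show "real (card (pair_members p)) \<le> real (card (satellites p) choose 2)"
      using card_pair_members_le_choose[OF assms(3)] by simp
  qed (use assms(1) in simp)
  then show ?thesis by simp
qed

lemma card_pair_unions_le_mutual_pairs:
  "real (card pair_unions) \<le> real n / 8 * real (2 * card mutual_pairs)"
proof -
  let ?h = "card mutual_pairs"
  have "real ?h - 1 \<le> real n / 2" using card_mutual_pairs_satellites_le by linarith
  then have "real ?h * (real ?h - 1) \<le> real ?h * (real n / 2)" by (rule mult_left_mono) simp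
  moreover have "real (card pair_unions) \<le> real ?h * (real ?h - 1) / 2"
    using card_pair_unions_le real_choose_two[of ?h] by (metis of_nat_le_iff)
  ultimately show ?thesis by (simp add: algebra_simps)
qed

lemma card_le_max_plus_linear:
  fixes t :: real
  assumes "0 < t" and codeg: "real (codeg_max n A) \<le> (t * real n)\<^sup>2 / 2"
  shows "real (card A) \<le> max ((real n)\<^sup>2 / 8) (t * (real n)\<^sup>2 / 2) + 194 * real n"
proof -
  let ?h = "card mutual_pairs" and ?s = "\<Sum>p\<in>mutual_pairs. card (satellites p)"
  have "(\<Sum>p\<in>mutual_pairs. real (card (pair_members p)))
      \<le> (\<Sum>p\<in>mutual_pairs. t * real n / 2 * real (card (satellites p)))"
    using card_pair_members_le_satellites[OF assms] by (rule sum_mono)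
  also have "\<dots> = t * real n / 2 * real ?s" by (simp add: sum_distrib_left)
  finally have "real (card pair_unions) + (\<Sum>p\<in>mutual_pairs. real (card (pair_members p)))
      \<le> real n / 8 * real (2 * ?h) + t * real n / 2 * real ?s"
    using card_pair_unions_le_mutual_pairs by linarith
  also have "\<dots> \<le> max (real n / 8) (t * real n / 2) * real n"
    using card_mutual_pairs_satellites_le[folded of_nat_le_iff[where 'a = real]]
    by (intro weighted_sum_le_max) (simp_all add: sum_nonneg)
  also have "\<dots> = max ((real n)\<^sup>2 / 8) (t * (real n)\<^sup>2 / 2)"
    by (simp add: max_mult_distrib_right power2_eq_square)
  finally have paired: "real (card pair_unions) + (\<Sum>p\<in>mutual_pairs. real (card (pair_members p)))
      \<le> max ((real n)\<^sup>2 / 8) (t * (real n)\<^sup>2 / 2)" .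
  have "real (card A) \<le> real (card {u\<in>A. \<exists>x\<in>u. \<not> pointed x}) + real (card pair_unions)
      + (\<Sum>p\<in>mutual_pairs. real (card (pair_members p))) + real (card private_members)
      + real (card kernel_members)"
    using card_le_sum_classes[folded of_nat_le_iff[where 'a = real]] by simp
  moreover have "real (card {u\<in>A. \<exists>x\<in>u. \<not> pointed x}) \<le> 192 * real n"
    using card_unpointed_members_le[folded of_nat_le_iff[where 'a = real]] by simp
  moreover have "real (card private_members) \<le> real n" "real (card kernel_members) \<le> real n"
    using card_private_members_le card_kernel_members_le by simp_all
  ultimately show ?thesis using paired by linarith
qed

end

theorem theorem6:
  fixes t :: real
  assumes "0 < t" and "t < 1"
  shows "\<forall>\<epsilon>>0. \<exists>N::nat. \<forall>n\<ge>N. \<forall>A.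
           G_independent n A \<and> real (codeg_max n A) \<le> (t * real n)^2 / 2 \<longrightarrow>
           real (card A) \<le> (1 + \<epsilon>) * max ((real n)^2 / 8) (t * (real n)^2 / 2)"
proof (intro allI impI)
  fix \<epsilon> :: real assume "0 < \<epsilon>"
  then obtain N :: nat where N: "\<And>n. N \<le> n \<Longrightarrow> 194 * real n \<le> \<epsilon> / 8 * (real n)\<^sup>2"
    using ex_linear_le_eps_square[of "\<epsilon> / 8" 194] by auto
  show "\<exists>N::nat. \<forall>n\<ge>N. \<forall>A.
           G_independent n A \<and> real (codeg_max n A) \<le> (t * real n)^2 / 2 \<longrightarrow>
           real (card A) \<le> (1 + \<epsilon>) * max ((real n)^2 / 8) (t * (real n)^2 / 2)"
  proof (intro exI[of _ N] allI impI)
    fix n A assume "N \<le> n" and A: "G_independent n A \<and> real (codeg_max n A) \<le> (t * real n)^2 / 2"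
    then interpret G41_independent n A by unfold_locales simp
    have "194 * real n \<le> \<epsilon> * ((real n)\<^sup>2 / 8)" using N[OF \<open>N \<le> n\<close>] by simp
    also have "\<dots> \<le> \<epsilon> * max ((real n)\<^sup>2 / 8) (t * (real n)\<^sup>2 / 2)"
      using \<open>0 < \<epsilon>\<close> by (intro mult_left_mono) simp_all
    finally have "194 * real n \<le> \<epsilon> * max ((real n)\<^sup>2 / 8) (t * (real n)\<^sup>2 / 2)" .
    then show "real (card A) \<le> (1 + \<epsilon>) * max ((real n)^2 / 8) (t * (real n)^2 / 2)"
      using card_le_max_plus_linear[OF assms(1)] A by (simp add: algebra_simps)
  qed
qed

end
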